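(* Let $I$ be a non-degenerate interval and $f:I\to\mathbb{R}$ continuous with a monotone graph. Then for every $x\in I$ the approximate upper right Dini derivative of $f$ at $x$ equals the upper right Dini derivative $\limsup_{y\to x+}\frac{f(y)-f(x)}{y-x}$; and likewise each of the other three approximate Dini derivatives equals the corresponding Dini derivative at every point.
   Context: The graph $\{(x,f(x)):x\in I\}\subseteq\mathbb{R}^2$ carries the Euclidean metric; a metric space is monotone if there are a linear order $<$ and $c>0$ with $d(x,y)\le c\,d(x,z)$ whenever $x<y<z$. The approximate upper right Dini derivative is $\overline{f}^+_{ap}(x)=\inf\{t:\lim_{\delta\to0+}\delta^{-1}\lambda(\{y\in(x,x+\delta):\frac{f(y)-f(x)}{y-x}\le t\})=1\}$ ($\lambda$ Lebesgue measure); the other three approximate Dini derivatives are defined analogously. *)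

theory Defs
  imports "HOL-Analysis.Analysis"
begin

definition monotone_metric_space :: "'a set \<Rightarrow> ('a \<Rightarrow> 'a \<Rightarrow> real) \<Rightarrow> bool" where
  "monotone_metric_space S d \<longleftrightarrow>
     (\<exists>r c. strict_linear_order_on S r \<and> c > 0 \<and>
        (\<forall>x\<in>S. \<forall>y\<in>S. \<forall>z\<in>S. (x, y) \<in> r \<and> (y, z) \<in> r \<longrightarrow> d x y \<le> c * d x z))"

text \<open>Graph of f over I, as a subset of the Euclidean plane (real \<times> real carries the
  Euclidean metric dist (a,b) (c,d) = sqrt ((a-c)^2 + (b-d)^2)).\<close>
definition graph_on :: "real set \<Rightarrow> (real \<Rightarrow> real) \<Rightarrow> (real \<times> real) set" where
  "graph_on I f = (\<lambda>x. (x, f x)) ` I"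

definition diff_quot :: "(real \<Rightarrow> real) \<Rightarrow> real \<Rightarrow> real \<Rightarrow> real" where
  "diff_quot f x y = (f y - f x) / (y - x)"

definition dini_upper_right :: "(real \<Rightarrow> real) \<Rightarrow> real set \<Rightarrow> real \<Rightarrow> ereal" where
  "dini_upper_right f I x = Limsup (at x within (I \<inter> {x<..})) (\<lambda>y. ereal (diff_quot f x y))"
definition dini_lower_right :: "(real \<Rightarrow> real) \<Rightarrow> real set \<Rightarrow> real \<Rightarrow> ereal" where
  "dini_lower_right f I x = Liminf (at x within (I \<inter> {x<..})) (\<lambda>y. ereal (diff_quot f x y))"
definition dini_upper_left :: "(real \<Rightarrow> real) \<Rightarrow> real set \<Rightarrow> real \<Rightarrow> ereal" where
  "dini_upper_left f I x = Limsup (at x within (I \<inter> {..<x})) (\<lambda>y. ereal (diff_quot f x y))"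
definition dini_lower_left :: "(real \<Rightarrow> real) \<Rightarrow> real set \<Rightarrow> real \<Rightarrow> ereal" where
  "dini_lower_left f I x = Liminf (at x within (I \<inter> {..<x})) (\<lambda>y. ereal (diff_quot f x y))"

definition approx_upper_right :: "(real \<Rightarrow> real) \<Rightarrow> real set \<Rightarrow> real \<Rightarrow> ereal" where
  "approx_upper_right f I x = Inf (ereal ` {t. ((\<lambda>\<delta>. measure lebesgue
       {y \<in> I \<inter> {x<..<x+\<delta>}. diff_quot f x y \<le> t} / \<delta>) \<longlongrightarrow> 1) (at_right 0)})"
definition approx_lower_right :: "(real \<Rightarrow> real) \<Rightarrow> real set \<Rightarrow> real \<Rightarrow> ereal" where
  "approx_lower_right f I x = Sup (ereal ` {t. ((\<lambda>\<delta>. measure lebesgue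
       {y \<in> I \<inter> {x<..<x+\<delta>}. diff_quot f x y \<ge> t} / \<delta>) \<longlongrightarrow> 1) (at_right 0)})"
definition approx_upper_left :: "(real \<Rightarrow> real) \<Rightarrow> real set \<Rightarrow> real \<Rightarrow> ereal" where
  "approx_upper_left f I x = Inf (ereal ` {t. ((\<lambda>\<delta>. measure lebesgue
       {y \<in> I \<inter> {x-\<delta><..<x}. diff_quot f x y \<le> t} / \<delta>) \<longlongrightarrow> 1) (at_right 0)})"
definition approx_lower_left :: "(real \<Rightarrow> real) \<Rightarrow> real set \<Rightarrow> real \<Rightarrow> ereal" where
  "approx_lower_left f I x = Sup (ereal ` {t. ((\<lambda>\<delta>. measure lebesgue
       {y \<in> I \<inter> {x-\<delta><..<x}. diff_quot f x y \<ge> t} / \<delta>) \<longlongrightarrow> 1) (at_right 0)})"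

end

theory Submission
  imports Defs
begin

text \<open>A monotone order on the graph of a continuous function on an interval must be the order of
  abscissae (up to reversal), by connectedness of the graph over subintervals. Hence there is \<open>K\<close> with
  \<open>|P z P y| \<le> K |P z P w|\<close> and \<open>|P w P y| \<le> K |P w P z|\<close> for \<open>z < y < w\<close>, where \<open>P v = (v, f v)\<close>.

  An approximate upper Dini derivative never exceeds the ordinary one. Conversely, suppose slopes
  above \<open>s\<close> occur arbitrarily close to the right of \<open>x\<close>, say at \<open>y\<close>, and let \<open>L\<close> be the line of slope
  \<open>t < s\<close> through \<open>P x\<close>. Either \<open>f > L\<close> on an interval left of \<open>y\<close> of length proportional to \<open>y - x\<close>,
  or \<open>f\<close> meets \<open>L\<close> at some \<open>z\<close> just left of \<open>y\<close>; then the monotonicity inequality prevents \<open>f\<close> from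
  returning to the level \<open>f z\<close> soon after \<open>y\<close>, which keeps \<open>f > L\<close> on an interval right of \<open>y\<close>.
  So the set of \<open>y\<close> with slope at most \<open>t\<close> misses a fixed proportion of \<open>(x, x + \<delta>)\<close> for arbitrarily
  small \<open>\<delta>\<close>, and its density at \<open>x\<close> is not 1. Left derivatives follow by the reflection
  \<open>v \<mapsto> - f (- v)\<close>, lower ones by \<open>f \<mapsto> - f\<close>.\<close>

section \<open>Monotone orders on graphs\<close>

lemma is_interval_atLeastAtMost_subset:
  fixes a b :: real
  assumes "is_interval I" "a \<in> I" "b \<in> I"
  shows "{a..b} \<subseteq> I"
proof
  fix x assume "x \<in> {a..b}"
  then show "x \<in> I" using mem_is_interval_1_I[OF assms] by simp
qed

definition bimonotone_order :: "'a::metric_space set \<Rightarrow> ('a \<times> 'a) set \<Rightarrow> real \<Rightarrow> bool" where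
  "bimonotone_order G r C \<longleftrightarrow> strict_linear_order_on G r \<and> C \<ge> 1 \<and>
     (\<forall>x\<in>G. \<forall>y\<in>G. \<forall>z\<in>G. (x, y) \<in> r \<and> (y, z) \<in> r \<longrightarrow>
        dist x y \<le> C * dist x z \<and> dist z y \<le> C * dist z x)"

lemma bimonotone_order_converse:
  assumes "bimonotone_order G r C"
  shows "bimonotone_order G (r\<inverse>) C"
proof -
  have lin: "strict_linear_order_on G r" and "C \<ge> 1"
    and mon: "\<forall>x\<in>G. \<forall>y\<in>G. \<forall>z\<in>G. (x, y) \<in> r \<and> (y, z) \<in> r \<longrightarrow>
        dist x y \<le> C * dist x z \<and> dist z y \<le> C * dist z x"
    using assms unfolding bimonotone_order_def by blast+
  have "dist x y \<le> C * dist x z \<and> dist z y \<le> C * dist z x"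
    if "x \<in> G" "y \<in> G" "z \<in> G" "(z, y) \<in> r" "(y, x) \<in> r" for x y z
    using mon that by blast
  with lin \<open>C \<ge> 1\<close> show ?thesis
    unfolding bimonotone_order_def strict_linear_order_on_def by simp
qed

lemma monotone_metric_space_bimonotone_order:
  assumes "monotone_metric_space G dist"
  obtains r C where "bimonotone_order G r C"
proof -
  obtain r c where lin: "strict_linear_order_on G r" and "c > 0"
    and mon: "\<forall>x\<in>G. \<forall>y\<in>G. \<forall>z\<in>G. (x, y) \<in> r \<and> (y, z) \<in> r \<longrightarrow> dist x y \<le> c * dist x z"
    using assms unfolding monotone_metric_space_def by blast
  have "dist x y \<le> (c + 1) * dist x z \<and> dist z y \<le> (c + 1) * dist z x"
    if "x \<in> G" "y \<in> G" "z \<in> G" "(x, y) \<in> r" "(y, z) \<in> r" for x y z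
  proof -
    have "dist x y \<le> c * dist x z" using mon that by blast
    moreover have "dist z y \<le> dist z x + dist x y" by (rule dist_triangle)
    ultimately show ?thesis
      using \<open>c > 0\<close> zero_le_dist[of x z]
      unfolding dist_commute[of z x] distrib_right by (intro conjI; linarith)
  qed
  with lin \<open>c > 0\<close> have "bimonotone_order G r (c + 1)"
    unfolding bimonotone_order_def by simp
  then show thesis ..
qed

lemma bimonotone_order_below_locally:
  assumes "bimonotone_order G r C" "p \<in> G" "q \<in> G" "p' \<in> G" "(p, q) \<in> r"
    and "dist p p' < dist p q / C"
  shows "(p', q) \<in> r"
proof -
  have lin: "strict_linear_order_on G r" and "C \<ge> 1"
    and mon: "\<And>x y z. x \<in> G \<Longrightarrow> y \<in> G \<Longrightarrow> z \<in> G \<Longrightarrow> (x, y) \<in> r \<Longrightarrow> (y, z) \<in> r \<Longrightarrow>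
                dist x y \<le> C * dist x z"
    using assms(1) unfolding bimonotone_order_def by blast+
  have "dist p q / C \<le> dist p q / 1"
    using \<open>C \<ge> 1\<close> by (intro divide_left_mono) auto
  with assms(6) have "dist p p' < dist p q" by simp
  then have "p' \<noteq> q" by auto
  moreover have "(q, p') \<notin> r"
  proof
    assume "(q, p') \<in> r"
    then have "dist p q \<le> C * dist p p'" using mon assms by blast
    with assms(6) \<open>C \<ge> 1\<close> show False by (simp add: pos_less_divide_eq mult.commute)
  qed
  ultimately show ?thesis
    using lin assms(3,4) unfolding strict_linear_order_on_def total_on_def by blast
qed

lemma bimonotone_order_connected_one_side:
  fixes G :: "'a::metric_space set"
  assumes ord: "bimonotone_order G r C" and "connected S" "S \<subseteq> G" "q \<in> G" "q \<notin> S"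
  shows "(\<forall>p\<in>S. (p, q) \<in> r) \<or> (\<forall>p\<in>S. (q, p) \<in> r)"
proof -
  have irr: "(p, p) \<notin> r" and tr: "trans r" and tot: "total_on G r" for p
    using ord unfolding bimonotone_order_def strict_linear_order_on_def irrefl_def by blast+
  have "C \<ge> 1" using ord unfolding bimonotone_order_def by blast
  define A where "A = (\<Union>p\<in>{p\<in>G. (p, q) \<in> r}. ball p (dist p q / C))"
  define B where "B = (\<Union>p\<in>{p\<in>G. (q, p) \<in> r}. ball p (dist p q / C))"
  have A: "(p', q) \<in> r" if "p' \<in> G" "p' \<in> A" for p'
  proof -
    from \<open>p' \<in> A\<close> obtain p where "p \<in> G" "(p, q) \<in> r" "dist p p' < dist p q / C"
      unfolding A_def by auto
    then show ?thesis
      using bimonotone_order_below_locally[OF ord _ \<open>q \<in> G\<close> \<open>p' \<in> G\<close>] by blast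
  qed
  have B: "(q, p') \<in> r" if "p' \<in> G" "p' \<in> B" for p'
  proof -
    from \<open>p' \<in> B\<close> obtain p where "p \<in> G" "(q, p) \<in> r" "dist p p' < dist p q / C"
      unfolding B_def by auto
    then show ?thesis
      using bimonotone_order_below_locally[OF bimonotone_order_converse[OF ord] _ \<open>q \<in> G\<close> \<open>p' \<in> G\<close>]
      by blast
  qed
  have "S \<subseteq> A \<union> B"
  proof
    fix p assume "p \<in> S"
    then have "p \<in> G" "p \<noteq> q" using assms by auto
    then have "p \<in> ball p (dist p q / C)" using \<open>C \<ge> 1\<close> by simp
    moreover have "(p, q) \<in> r \<or> (q, p) \<in> r"
      using tot \<open>p \<in> G\<close> \<open>q \<in> G\<close> \<open>p \<noteq> q\<close> unfolding total_on_def by blast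
    ultimately show "p \<in> A \<union> B" using \<open>p \<in> G\<close> unfolding A_def B_def by blast
  qed
  moreover have "A \<inter> B \<inter> S = {}"
  proof (intro equals0I)
    fix p assume "p \<in> A \<inter> B \<inter> S"
    then have "(p, q) \<in> r" "(q, p) \<in> r" using A B \<open>S \<subseteq> G\<close> by auto
    then show False using irr tr by (meson transD)
  qed
  moreover have "open A" "open B" unfolding A_def B_def by auto
  ultimately have "A \<inter> S = {} \<or> B \<inter> S = {}" using connectedD[OF \<open>connected S\<close>] by blast
  then show ?thesis using A B \<open>S \<subseteq> A \<union> B\<close> assms(3) by blast
qed

lemma bimonotone_order_graph_between:
  fixes f :: "real \<Rightarrow> real"
  assumes I: "is_interval I" and cont: "continuous_on I f"
    and ord: "bimonotone_order (graph_on I f) r C"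
    and "z \<in> I" "w \<in> I" "z < y" "y < w"
  shows "((z, f z), (y, f y)) \<in> r \<and> ((y, f y), (w, f w)) \<in> r \<or>
         ((w, f w), (y, f y)) \<in> r \<and> ((y, f y), (z, f z)) \<in> r"
proof -
  define P where "P v = (v, f v)" for v
  have G: "graph_on I f = P ` I" unfolding graph_on_def P_def ..
  have irr: "(p, p) \<notin> r" and tr: "trans r" and tot: "total_on (P ` I) r" for p
    using ord unfolding bimonotone_order_def strict_linear_order_on_def irrefl_def G by blast+
  have asym: "(q, p) \<notin> r" if "(p, q) \<in> r" for p q
    using that irr tr by (meson transD)
  note sub = is_interval_atLeastAtMost_subset[OF I]
  have same_side: "((P a, P q) \<in> r \<longleftrightarrow> (P b, P q) \<in> r) \<and> ((P q, P a) \<in> r \<longleftrightarrow> (P q, P b) \<in> r)"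
    if "a \<in> I" "b \<in> I" "q \<in> I" "a \<le> b" "q \<notin> {a..b}" for a b q
  proof -
    have "continuous_on {a..b} P"
      unfolding P_def by (intro continuous_intros continuous_on_subset[OF cont sub[OF that(1,2)]])
    then have "connected (P ` {a..b})" by (intro connected_continuous_image) auto
    moreover have "P ` {a..b} \<subseteq> P ` I" using sub[OF that(1,2)] by blast
    moreover have "P q \<notin> P ` {a..b}" using that(5) unfolding P_def by auto
    ultimately have "(\<forall>p\<in>P ` {a..b}. (p, P q) \<in> r) \<or> (\<forall>p\<in>P ` {a..b}. (P q, p) \<in> r)"
      using bimonotone_order_connected_one_side[OF ord[unfolded G]] that(3) by blast
    moreover have "P a \<in> P ` {a..b}" "P b \<in> P ` {a..b}" using that(4) by auto
    ultimately show ?thesis using asym by blast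
  qed
  have "y \<in> I" using sub[OF \<open>z \<in> I\<close> \<open>w \<in> I\<close>] assms(6,7) by auto
  have zw: "(P z, P y) \<in> r \<longleftrightarrow> (P z, P w) \<in> r" "(P y, P z) \<in> r \<longleftrightarrow> (P w, P z) \<in> r"
    using same_side[of y w z] assms(4-7) \<open>y \<in> I\<close> by auto
  have yz: "(P y, P w) \<in> r \<longleftrightarrow> (P z, P w) \<in> r" "(P w, P y) \<in> r \<longleftrightarrow> (P w, P z) \<in> r"
    using same_side[of z y w] assms(4-7) \<open>y \<in> I\<close> by auto
  have "P z \<noteq> P w" using assms(6,7) unfolding P_def by simp
  then have "(P z, P w) \<in> r \<or> (P w, P z) \<in> r"
    using tot assms(4,5) unfolding total_on_def by blast
  then show ?thesis using zw yz unfolding P_def by blast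
qed

definition monotone_graph :: "real set \<Rightarrow> (real \<Rightarrow> real) \<Rightarrow> real \<Rightarrow> bool" where
  "monotone_graph I f K \<longleftrightarrow> (\<forall>z\<in>I. \<forall>y\<in>I. \<forall>w\<in>I. z < y \<and> y < w \<longrightarrow>
     dist (z, f z) (y, f y) \<le> K * dist (z, f z) (w, f w) \<and>
     dist (w, f w) (y, f y) \<le> K * dist (w, f w) (z, f z))"

lemma monotone_metric_space_graph_imp_monotone_graph:
  fixes f :: "real \<Rightarrow> real"
  assumes "is_interval I" "continuous_on I f" "monotone_metric_space (graph_on I f) dist"
  obtains K where "K \<ge> 1" "monotone_graph I f K"
proof -
  obtain r K where ord: "bimonotone_order (graph_on I f) r K"
    using monotone_metric_space_bimonotone_order[OF assms(3)] .
  then have "K \<ge> 1" and mon: "\<And>p q u. p \<in> graph_on I f \<Longrightarrow> q \<in> graph_on I f \<Longrightarrow> u \<in> graph_on I f \<Longrightarrow>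
      (p, q) \<in> r \<Longrightarrow> (q, u) \<in> r \<Longrightarrow> dist p q \<le> K * dist p u \<and> dist u q \<le> K * dist u p"
    unfolding bimonotone_order_def by blast+
  have "monotone_graph I f K"
    unfolding monotone_graph_def
  proof (intro ballI impI)
    fix z y w assume "z \<in> I" "y \<in> I" "w \<in> I" and zyw: "z < y \<and> y < w"
    then have "(z, f z) \<in> graph_on I f" "(y, f y) \<in> graph_on I f" "(w, f w) \<in> graph_on I f"
      unfolding graph_on_def by auto
    with bimonotone_order_graph_between[OF assms(1,2) ord \<open>z \<in> I\<close> \<open>w \<in> I\<close>] zyw mon
    show "dist (z, f z) (y, f y) \<le> K * dist (z, f z) (w, f w) \<and>
          dist (w, f w) (y, f y) \<le> K * dist (w, f w) (z, f z)" by blast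
  qed
  with \<open>K \<ge> 1\<close> show thesis ..
qed

lemma monotone_graph_uminus: "monotone_graph I f K \<Longrightarrow> monotone_graph I (\<lambda>v. - f v) K"
  unfolding monotone_graph_def by (simp add: dist_Pair_Pair dist_real_def abs_minus_commute)

lemma monotone_graph_reflect:
  assumes "monotone_graph I f K"
  shows "monotone_graph (uminus ` I) (\<lambda>v. - f (- v)) K"
  unfolding monotone_graph_def
proof (intro ballI impI)
  have dist_reflect: "dist (a, - b) (c, - d) = dist (- a, b) (- c, d)" for a b c d :: real
    by (simp add: dist_Pair_Pair dist_real_def abs_minus_commute)
  fix z y w assume "z \<in> uminus ` I" "y \<in> uminus ` I" "w \<in> uminus ` I" "z < y \<and> y < w"
  then have "- w \<in> I" "- y \<in> I" "- z \<in> I" "- w < - y \<and> - y < - z" by auto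
  with assms show "dist (z, - f (- z)) (y, - f (- y)) \<le> K * dist (z, - f (- z)) (w, - f (- w)) \<and>
      dist (w, - f (- w)) (y, - f (- y)) \<le> K * dist (w, - f (- w)) (z, - f (- z))"
    unfolding monotone_graph_def dist_reflect by blast
qed

section \<open>Slopes on monotone graphs\<close>

lemma dist_Pair_le_add_dist: "dist (a, b) (c, d) \<le> dist a c + dist b d"
  unfolding dist_Pair_Pair using sqrt_sum_squares_le_sum_abs[of "dist a c" "dist b d"] by simp

text \<open>The graph cannot come back to the level \<open>f z\<close> between \<open>y\<close> and \<open>w\<close>: by the intermediate value
  theorem this would happen at some point violating monotonicity.\<close>
lemma monotone_graph_rise_persists:
  fixes f :: "real \<Rightarrow> real"
  assumes I: "is_interval I" and cont: "continuous_on I f" and mon: "monotone_graph I f K"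
    and "K \<ge> 0" "z \<in> I" "w \<in> I" "z < y" "y < w"
    and rise: "K * (w - z) < f y - f z"
  shows "f y - f z \<le> K * ((w - z) + (f w - f z))"
proof -
  have sub: "{z..w} \<subseteq> I" by (rule is_interval_atLeastAtMost_subset[OF I assms(5,6)])
  have bound: "f y - f z \<le> K * ((v - z) + \<bar>f v - f z\<bar>)" if "v \<in> {y<..w}" for v
  proof -
    have "f y - f z \<le> dist (f z) (f y)" unfolding dist_real_def by linarith
    also have "\<dots> \<le> dist (z, f z) (y, f y)" using dist_snd_le[of "(z, f z)" "(y, f y)"] by simp
    also have "\<dots> \<le> K * dist (z, f z) (v, f v)"
    proof -
      have "y \<in> I" "v \<in> I" "z < y \<and> y < v" using sub that assms(7) by auto
      with mon \<open>z \<in> I\<close> show ?thesis unfolding monotone_graph_def by blast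
    qed
    also have "\<dots> \<le> K * ((v - z) + \<bar>f v - f z\<bar>)"
      using dist_Pair_le_add_dist[of z "f z" v "f v"] that assms(7) \<open>K \<ge> 0\<close>
      by (intro mult_left_mono) (auto simp: dist_real_def abs_minus_commute)
    finally show ?thesis .
  qed
  have "0 \<le> K * (w - z)" using \<open>K \<ge> 0\<close> assms(7,8) by simp
  with rise have "f y - f z > 0" by linarith
  have "f z < f w"
  proof (rule ccontr)
    assume "\<not> f z < f w"
    moreover have "continuous_on {y..w} f"
      using sub assms(7) by (intro continuous_on_subset[OF cont]) auto
    ultimately obtain v where v: "y \<le> v" "v \<le> w" "f v = f z"
      using IVT2'[of f w "f z" y] \<open>f y - f z > 0\<close> assms(8) by fastforce
    then have "v \<in> {y<..w}" using \<open>f y - f z > 0\<close> by (cases "v = y") auto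
    then have "f y - f z \<le> K * (v - z)" using bound[of v] v(3) by simp
    also have "\<dots> \<le> K * (w - z)" using v(2) \<open>K \<ge> 0\<close> by (intro mult_left_mono) auto
    finally have "f y - f z \<le> K * (w - z)" .
    with rise show False by simp
  qed
  then show ?thesis using bound[of w] assms(8) by simp
qed

lemma monotone_graph_chord_slope_persists:
  fixes f :: "real \<Rightarrow> real"
  assumes I: "is_interval I" and cont: "continuous_on I f" and mon: "monotone_graph I f K"
    and "K \<ge> 1" "z \<in> I" "w \<in> I" "z < y" "y < w" "y - z < \<eta>" "w - y < \<eta>"
    and steep: "3 * K * (1 + \<bar>t\<bar>) * \<eta> \<le> f y - f z - t * (y - z)"
  shows "t * (w - z) < f w - f z"
proof -
  have "\<bar>t\<bar> \<le> K * \<bar>t\<bar>" using mult_right_mono[OF \<open>1 \<le> K\<close> abs_ge_zero[of t]] by simp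
  then have "\<bar>t\<bar> * (y - z) \<le> K * \<bar>t\<bar> * \<eta>" using assms(7,9) by (intro mult_mono) auto
  moreover have "- (\<bar>t\<bar> * (y - z)) \<le> t * (y - z)"
    using mult_right_mono[of "- \<bar>t\<bar>" t "y - z"] assms(7) by simp
  moreover have "3 * K * (1 + \<bar>t\<bar>) * \<eta> = 2 * K * (1 + \<bar>t\<bar>) * \<eta> + K * \<bar>t\<bar> * \<eta> + K * \<eta>"
    by (simp add: algebra_simps)
  moreover have "0 \<le> K * \<eta>" using assms(4,7,9) by simp
  ultimately have rise: "2 * K * (1 + \<bar>t\<bar>) * \<eta> \<le> f y - f z" using steep by linarith
  have "0 < K * (1 + \<bar>t\<bar>)" using \<open>K \<ge> 1\<close> by (simp add: add_pos_nonneg)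
  moreover have "w - z < 2 * \<eta>" using assms(9,10) by simp
  ultimately have "K * (1 + \<bar>t\<bar>) * (w - z) < K * (1 + \<bar>t\<bar>) * (2 * \<eta>)"
    by (intro mult_strict_left_mono)
  then have small: "K * (1 + \<bar>t\<bar>) * (w - z) < 2 * K * (1 + \<bar>t\<bar>) * \<eta>"
    by (simp add: mult_ac)
  have "K * (w - z) \<le> K * (1 + \<bar>t\<bar>) * (w - z)"
    using \<open>K \<ge> 1\<close> assms(7,8) by (simp add: mult_left_mono)
  with small rise have "K * (w - z) < f y - f z" by linarith
  then have persists: "f y - f z \<le> K * ((w - z) + (f w - f z))"
    using monotone_graph_rise_persists[OF I cont mon _ assms(5-8)] \<open>K \<ge> 1\<close> by simp
  show ?thesis
  proof (rule ccontr)
    assume "\<not> t * (w - z) < f w - f z"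
    moreover have "t * (w - z) \<le> \<bar>t\<bar> * (w - z)" using assms(7,8) by (intro mult_right_mono) auto
    ultimately have "K * (f w - f z) \<le> K * (\<bar>t\<bar> * (w - z))"
      using \<open>K \<ge> 1\<close> by (intro mult_left_mono) auto
    moreover have "K * ((w - z) + \<bar>t\<bar> * (w - z)) = K * (1 + \<bar>t\<bar>) * (w - z)"
      by (simp add: algebra_simps)
    ultimately show False using persists rise small unfolding distrib_left by linarith
  qed
qed

lemma monotone_graph_interval_above_slope:
  fixes f :: "real \<Rightarrow> real"
  assumes I: "is_interval I" and cont: "continuous_on I f" and mon: "monotone_graph I f K"
    and "K \<ge> 1" "x \<in> I" "y + \<eta> \<in> I" "0 < \<eta>" "\<eta> < y - x"
    and steep: "3 * K * (1 + \<bar>t\<bar>) * \<eta> \<le> f y - f x - t * (y - x)"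
  shows "\<exists>a. x \<le> a \<and> a + \<eta> / 2 \<le> y + \<eta> \<and> (\<forall>v\<in>{a<..<a + \<eta> / 2}. t < diff_quot f x v)"
proof -
  define L where "L v = f x + t * (v - x)" for v
  have above: "t < diff_quot f x v" if "x < v" "L v < f v" for v
    using that unfolding L_def diff_quot_def by (simp add: pos_less_divide_eq)
  have sub: "{x..y + \<eta>} \<subseteq> I" by (rule is_interval_atLeastAtMost_subset[OF I assms(5,6)])
  consider "\<forall>v\<in>{y - \<eta><..<y}. L v < f v" | z0 where "y - \<eta> < z0" "z0 < y" "f z0 \<le> L z0"
    by force
  then show ?thesis
  proof cases
    case 1
    then show ?thesis using above assms(7,8) by (intro exI[of _ "y - \<eta>"]) auto
  next
    case 2
    have "0 < K * (1 + \<bar>t\<bar>) * \<eta>" using assms(4,7) by (simp add: add_pos_nonneg)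
    then have "L y < f y" using steep unfolding L_def by simp
    moreover have "continuous_on {z0..y} (\<lambda>v. f v - L v)"
      unfolding L_def using sub 2 assms(8) by (intro continuous_intros continuous_on_subset[OF cont]) auto
    ultimately obtain z where z: "z0 \<le> z" "z \<le> y" "f z = L z"
      using IVT'[of "\<lambda>v. f v - L v" z0 0 y] 2 by fastforce
    with \<open>L y < f y\<close> have "z < y" by (cases "z = y") auto
    have "x < z" using 2 z assms(8) by linarith
    have "f y - f z - t * (y - z) = f y - f x - t * (y - x)"
      using z(3) unfolding L_def by (simp add: algebra_simps)
    with steep have steep_z: "3 * K * (1 + \<bar>t\<bar>) * \<eta> \<le> f y - f z - t * (y - z)" by simp
    show ?thesis
    proof (intro exI[of _ y] conjI ballI)
      fix w assume w: "w \<in> {y<..<y + \<eta> / 2}"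
      have "z \<in> I" "w \<in> I" using sub \<open>x < z\<close> z(2) w by auto
      with w z(1) 2(1) have "t * (w - z) < f w - f z"
        using monotone_graph_chord_slope_persists[OF I cont mon \<open>K \<ge> 1\<close> _ _ \<open>z < y\<close> _ _ _ steep_z] by simp
      then show "t < diff_quot f x w"
        using above[of w] z(3) \<open>x < z\<close> \<open>z < y\<close> w unfolding L_def by (simp add: algebra_simps)
    next
      show "x \<le> y" "y + \<eta> / 2 \<le> y + \<eta>" using assms(7,8) by auto
    qed
  qed
qed

lemma monotone_graph_steep_point_interval:
  fixes f :: "real \<Rightarrow> real"
  assumes I: "is_interval I" and cont: "continuous_on I f" and mon: "monotone_graph I f K"
    and "K \<ge> 1" "x \<in> I" "x1 \<in> I" "x < y" "2 * (y - x) < x1 - x"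
    and e: "0 < e" "e \<le> 1 / 2" "3 * K * (1 + \<bar>t\<bar>) * e \<le> s - t"
    and "s < diff_quot f x y"
  shows "\<exists>a. {a<..<a + e * (y - x) / 2} \<subseteq> {v \<in> I \<inter> {x<..<y + e * (y - x)}. t < diff_quot f x v}"
proof -
  define \<eta> where "\<eta> = e * (y - x)"
  have "0 < \<eta>" using e(1) assms(7) unfolding \<eta>_def by simp
  have "2 * \<eta> = (2 * e) * (y - x)" unfolding \<eta>_def by simp
  also have "\<dots> \<le> 1 * (y - x)" using e(2) assms(7) by (intro mult_right_mono) auto
  finally have "2 * \<eta> \<le> y - x" by simp
  then have sub: "{x..y + \<eta>} \<subseteq> I"
    using is_interval_atLeastAtMost_subset[OF I \<open>x \<in> I\<close> \<open>x1 \<in> I\<close>] assms(8) by auto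
  have "s * (y - x) < f y - f x"
    using \<open>s < diff_quot f x y\<close> assms(7) unfolding diff_quot_def by (simp add: pos_less_divide_eq mult.commute)
  moreover have "3 * K * (1 + \<bar>t\<bar>) * \<eta> \<le> (s - t) * (y - x)"
    using mult_right_mono[OF e(3), of "y - x"] assms(7) unfolding \<eta>_def by (simp add: mult_ac)
  ultimately have "3 * K * (1 + \<bar>t\<bar>) * \<eta> \<le> f y - f x - t * (y - x)"
    by (simp add: algebra_simps)
  moreover have "y + \<eta> \<in> I" using sub \<open>0 < \<eta>\<close> assms(7) by auto
  moreover have "\<eta> < y - x" using \<open>0 < \<eta>\<close> \<open>2 * \<eta> \<le> y - x\<close> by simp
  ultimately obtain a where a: "x \<le> a" "a + \<eta> / 2 \<le> y + \<eta>"
      and above: "\<forall>v\<in>{a<..<a + \<eta> / 2}. t < diff_quot f x v"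
    using monotone_graph_interval_above_slope[OF I cont mon \<open>K \<ge> 1\<close> \<open>x \<in> I\<close> _ \<open>0 < \<eta>\<close>] by blast
  have "{a<..<a + \<eta> / 2} \<subseteq> {v \<in> I \<inter> {x<..<y + \<eta>}. t < diff_quot f x v}"
  proof
    fix v assume v: "v \<in> {a<..<a + \<eta> / 2}"
    then have "x < v" "v < y + \<eta>" using a by auto
    with v above sub show "v \<in> {v \<in> I \<inter> {x<..<y + \<eta>}. t < diff_quot f x v}" by auto
  qed
  then show ?thesis unfolding \<eta>_def by auto
qed

lemma monotone_graph_right_slope_intervals:
  fixes f :: "real \<Rightarrow> real"
  assumes I: "is_interval I" and cont: "continuous_on I f" and mon: "monotone_graph I f K"
    and "K \<ge> 1" "x \<in> I" "x1 \<in> I" "x < x1" "t < s"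
    and steep: "\<exists>\<^sub>F y in at x within (I \<inter> {x<..}). s < diff_quot f x y"
  shows "\<exists>e>0. \<forall>d>0. \<exists>\<delta>\<in>{0<..<d}. \<exists>a.
           {a<..<a + e * \<delta>} \<subseteq> {y \<in> I \<inter> {x<..<x + \<delta>}. t < diff_quot f x y}"
proof -
  define e where "e = min (1 / 2) ((s - t) / (3 * K * (1 + \<bar>t\<bar>)))"
  have c: "0 < 3 * K * (1 + \<bar>t\<bar>)" using \<open>K \<ge> 1\<close> by (simp add: add_pos_nonneg)
  then have "0 < e" using \<open>t < s\<close> unfolding e_def by simp
  have "e \<le> 1 / 2" unfolding e_def by simp
  have "e \<le> (s - t) / (3 * K * (1 + \<bar>t\<bar>))" unfolding e_def by simp
  then have e_le: "3 * K * (1 + \<bar>t\<bar>) * e \<le> s - t" using c by (simp add: le_divide_eq mult.commute)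
  have "\<exists>\<delta>\<in>{0<..<d}. \<exists>a. {a<..<a + e / (2 * (1 + e)) * \<delta>} \<subseteq>
                          {y \<in> I \<inter> {x<..<x + \<delta>}. t < diff_quot f x y}" if "d > 0" for d
  proof -
    have "0 < min (d / 2) ((x1 - x) / 2)" using \<open>d > 0\<close> \<open>x < x1\<close> by simp
    then obtain y where y: "y \<in> I" "x < y" "dist y x < min (d / 2) ((x1 - x) / 2)" "s < diff_quot f x y"
      using steep unfolding frequently_at by blast
    then have "2 * (y - x) < d" "2 * (y - x) < x1 - x" unfolding dist_real_def by simp_all
    then obtain a where a: "{a<..<a + e * (y - x) / 2} \<subseteq> {v \<in> I \<inter> {x<..<y + e * (y - x)}. t < diff_quot f x v}"
      using monotone_graph_steep_point_interval[OF I cont mon \<open>K \<ge> 1\<close> \<open>x \<in> I\<close> \<open>x1 \<in> I\<close> \<open>x < y\<close> _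
          \<open>0 < e\<close> \<open>e \<le> 1 / 2\<close> e_le y(4)] by blast
    define \<delta> where "\<delta> = (1 + e) * (y - x)"
    have scale: "e / (2 * (1 + e)) * \<delta> = e * (y - x) / 2" "x + \<delta> = y + e * (y - x)"
      using \<open>0 < e\<close> unfolding \<delta>_def by (simp_all add: field_simps)
    have "{a<..<a + e / (2 * (1 + e)) * \<delta>} \<subseteq> {v \<in> I \<inter> {x<..<x + \<delta>}. t < diff_quot f x v}"
      unfolding scale by (rule a)
    moreover have "0 < \<delta>" using \<open>0 < e\<close> \<open>x < y\<close> unfolding \<delta>_def by simp
    moreover have "\<delta> \<le> 2 * (y - x)"
      using \<open>e \<le> 1 / 2\<close> \<open>x < y\<close> unfolding \<delta>_def by (intro mult_right_mono) auto
    then have "\<delta> < d" using \<open>2 * (y - x) < d\<close> by simp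
    ultimately show ?thesis by (intro bexI[of _ \<delta>] exI[of _ a]) auto
  qed
  moreover have "0 < e / (2 * (1 + e))" using \<open>0 < e\<close> by simp
  ultimately show ?thesis by blast
qed

lemma in_uminus_image_iff:
  fixes x :: "'a::group_add"
  shows "x \<in> uminus ` A \<longleftrightarrow> - x \<in> A"
proof
  assume "- x \<in> A"
  then have "- (- x) \<in> uminus ` A" by (rule imageI)
  then show "x \<in> uminus ` A" by simp
qed auto

lemma diff_quot_uminus: "diff_quot (\<lambda>v. - f v) x y = - diff_quot f x y"
  unfolding diff_quot_def minus_divide_left by simp

lemma diff_quot_reflect: "diff_quot (\<lambda>v. - f (- v)) (- x) y = diff_quot f x (- y)"
proof -
  have "diff_quot (\<lambda>v. - f (- v)) (- x) y = - (f (- y) - f x) / - (- y - x)"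
    unfolding diff_quot_def by (simp add: algebra_simps)
  then show ?thesis unfolding diff_quot_def by (simp only: minus_divide_divide)
qed

lemma monotone_graph_left_slope_intervals:
  fixes f :: "real \<Rightarrow> real"
  assumes I: "is_interval I" and cont: "continuous_on I f" and mon: "monotone_graph I f K"
    and "K \<ge> 1" "x \<in> I" "x0 \<in> I" "x0 < x" "t < s"
    and steep: "\<exists>\<^sub>F y in at x within (I \<inter> {..<x}). s < diff_quot f x y"
  shows "\<exists>e>0. \<forall>d>0. \<exists>\<delta>\<in>{0<..<d}. \<exists>a.
           {a<..<a + e * \<delta>} \<subseteq> {y \<in> I \<inter> {x - \<delta><..<x}. t < diff_quot f x y}"
proof -
  define g where "g v = - f (- v)" for v
  define J where "J = uminus ` I"
  have J_iff: "v \<in> J \<longleftrightarrow> - v \<in> I" for v unfolding J_def by (rule in_uminus_image_iff)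
  have slope_g: "diff_quot g (- x) v = diff_quot f x (- v)" for v
    unfolding g_def by (rule diff_quot_reflect)
  have J: "is_interval J" unfolding J_def by (rule is_interval_uminusI[OF I])
  have "continuous_on J (\<lambda>v. f (- v))"
    by (rule continuous_on_compose2[OF cont]) (auto intro: continuous_intros simp: J_iff)
  then have cont_g: "continuous_on J g" unfolding g_def by (rule continuous_on_minus)
  have mon_g: "monotone_graph J g K"
    unfolding g_def J_def by (rule monotone_graph_reflect[OF mon])
  have steep_g: "\<exists>\<^sub>F v in at (- x) within (J \<inter> {- x<..}). s < diff_quot g (- x) v"
    unfolding frequently_at
  proof (intro allI impI)
    fix d :: real assume "d > 0"
    then obtain y where "y \<in> I \<inter> {..<x}" "y \<noteq> x" "dist y x < d" "s < diff_quot f x y"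
      using steep unfolding frequently_at by blast
    then show "\<exists>v\<in>J \<inter> {- x<..}. v \<noteq> - x \<and> dist v (- x) < d \<and> s < diff_quot g (- x) v"
      by (intro bexI[of _ "- y"]) (auto simp: J_iff slope_g dist_real_def)
  qed
  have "- x \<in> J" "- x0 \<in> J" "- x < - x0" using assms(5-7) J_iff by auto
  then obtain e where "e > 0" and intervals: "\<forall>d>0. \<exists>\<delta>\<in>{0<..<d}. \<exists>a.
      {a<..<a + e * \<delta>} \<subseteq> {v \<in> J \<inter> {- x<..<- x + \<delta>}. t < diff_quot g (- x) v}"
    using monotone_graph_right_slope_intervals[OF J cont_g mon_g \<open>K \<ge> 1\<close> _ _ _ \<open>t < s\<close> steep_g] by blast
  have "\<exists>\<delta>\<in>{0<..<d}. \<exists>a. {a<..<a + e * \<delta>} \<subseteq> {y \<in> I \<inter> {x - \<delta><..<x}. t < diff_quot f x y}"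
    if "d > 0" for d
  proof -
    obtain \<delta> a where "\<delta> \<in> {0<..<d}"
      and sub: "{a<..<a + e * \<delta>} \<subseteq> {v \<in> J \<inter> {- x<..<- x + \<delta>}. t < diff_quot g (- x) v}"
      using intervals \<open>d > 0\<close> by blast
    moreover have "{- (a + e * \<delta>)<..<- (a + e * \<delta>) + e * \<delta>} \<subseteq> {y \<in> I \<inter> {x - \<delta><..<x}. t < diff_quot f x y}"
    proof
      fix y assume "y \<in> {- (a + e * \<delta>)<..<- (a + e * \<delta>) + e * \<delta>}"
      then have "- y \<in> {a<..<a + e * \<delta>}" by auto
      then have "- y \<in> J" "- x < - y" "- y < - x + \<delta>" "t < diff_quot g (- x) (- y)"
        using sub by auto
      then show "y \<in> {y \<in> I \<inter> {x - \<delta><..<x}. t < diff_quot f x y}"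
        unfolding J_iff slope_g by simp
    qed
    ultimately show ?thesis by blast
  qed
  with \<open>e > 0\<close> show ?thesis by blast
qed

section \<open>Approximate and ordinary Dini derivatives\<close>

lemma Inf_ereal_image_eqI:
  fixes L :: ereal and T :: "real set"
  assumes above: "\<And>t. L < ereal t \<Longrightarrow> t \<in> T" and below: "\<And>t. t \<in> T \<Longrightarrow> L \<le> ereal t"
  shows "Inf (ereal ` T) = L"
proof (rule antisym)
  show "L \<le> Inf (ereal ` T)" using below by (auto intro: Inf_greatest)
  show "Inf (ereal ` T) \<le> L"
  proof (rule dense_ge)
    fix u assume "L < u"
    then show "Inf (ereal ` T) \<le> u"
      using above by (cases u) (auto intro: Inf_lower)
  qed
qed

lemma density_not_tendsto_1_if_gaps:
  fixes W B :: "real \<Rightarrow> real set"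
  assumes W: "\<And>\<delta>. 0 < \<delta> \<Longrightarrow> W \<delta> \<in> fmeasurable lebesgue \<and> measure lebesgue (W \<delta>) = \<delta>"
    and B: "\<And>\<delta>. B \<delta> \<subseteq> W \<delta>" and "e > 0"
    and gaps: "\<forall>d>0. \<exists>\<delta>\<in>{0<..<d}. \<exists>a. {a<..<a + e * \<delta>} \<subseteq> W \<delta> - B \<delta>"
  shows "\<not> ((\<lambda>\<delta>. measure lebesgue (B \<delta>) / \<delta>) \<longlongrightarrow> 1) (at_right 0)"
proof
  assume "((\<lambda>\<delta>. measure lebesgue (B \<delta>) / \<delta>) \<longlongrightarrow> 1) (at_right 0)"
  then have "\<forall>\<^sub>F \<delta> in at_right 0. 1 - e < measure lebesgue (B \<delta>) / \<delta>"
    using \<open>e > 0\<close> by (intro order_tendstoD(1)) auto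
  then obtain d where "d > 0" and large: "\<And>\<delta>. 0 < \<delta> \<Longrightarrow> \<delta> < d \<Longrightarrow> 1 - e < measure lebesgue (B \<delta>) / \<delta>"
    unfolding eventually_at_right_field by auto
  obtain \<delta> a where "\<delta> \<in> {0<..<d}" and gap: "{a<..<a + e * \<delta>} \<subseteq> W \<delta> - B \<delta>"
    using gaps \<open>d > 0\<close> by blast
  then have \<delta>: "0 < \<delta>" "\<delta> < d" by auto
  define J where "J = {a<..<a + e * \<delta>}"
  have "W \<delta> \<in> fmeasurable lebesgue" "measure lebesgue (W \<delta>) = \<delta>" using W \<delta>(1) by auto
  moreover have "J \<in> sets lebesgue" "measure lebesgue J = e * \<delta>"
    using \<open>e > 0\<close> \<delta>(1) unfolding J_def by auto
  ultimately have WJ: "W \<delta> - J \<in> fmeasurable lebesgue" "measure lebesgue (W \<delta> - J) = \<delta> - e * \<delta>"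
    using measurable_measure_Diff[of "W \<delta>" lebesgue J] gap unfolding J_def by auto
  have "B \<delta> \<subseteq> W \<delta> - J" using B gap unfolding J_def by blast
  have "measure lebesgue (B \<delta>) \<le> measure lebesgue (W \<delta> - J)"
  proof (cases "B \<delta> \<in> sets lebesgue")
    case True
    then show ?thesis using measure_mono_fmeasurable[OF \<open>B \<delta> \<subseteq> W \<delta> - J\<close> _ WJ(1)] by blast
  qed (simp add: measure_notin_sets)
  then have "measure lebesgue (B \<delta>) \<le> \<delta> - e * \<delta>" using WJ(2) by simp
  then have "measure lebesgue (B \<delta>) / \<delta> \<le> 1 - e" using \<delta>(1) by (simp add: divide_simps algebra_simps)
  with large[OF \<delta>] show False by simp
qed

lemma density_tendsto_1_if_eventually_below:
  fixes q :: "real \<Rightarrow> real" and W :: "real \<Rightarrow> real set"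
  assumes W: "\<And>\<delta>. 0 < \<delta> \<Longrightarrow> W \<delta> \<in> fmeasurable lebesgue \<and> measure lebesgue (W \<delta>) = \<delta>"
    and W_near: "\<And>\<delta>. W \<delta> \<subseteq> (S - {x}) \<inter> ball x \<delta>"
    and W_in: "\<forall>\<^sub>F \<delta> in at_right 0. W \<delta> \<subseteq> I"
    and ev: "\<forall>\<^sub>F y in at x within (I \<inter> S). q y < t"
  shows "((\<lambda>\<delta>. measure lebesgue {y \<in> I \<inter> W \<delta>. q y \<le> t} / \<delta>) \<longlongrightarrow> 1) (at_right 0)"
proof -
  obtain d where "d > 0" and below: "\<And>y. y \<in> I \<inter> S \<Longrightarrow> y \<noteq> x \<Longrightarrow> dist y x < d \<Longrightarrow> q y < t"
    using ev unfolding eventually_at by blast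
  have "\<forall>\<^sub>F \<delta> in at_right 0. 0 < \<delta> \<and> \<delta> < d"
    using \<open>d > 0\<close> unfolding eventually_at_right_field by blast
  with W_in have "\<forall>\<^sub>F \<delta> in at_right 0. measure lebesgue {y \<in> I \<inter> W \<delta>. q y \<le> t} / \<delta> = 1"
  proof eventually_elim
    case (elim \<delta>)
    have "{y \<in> I \<inter> W \<delta>. q y \<le> t} = W \<delta>"
    proof (intro set_eqI iffI)
      fix y assume "y \<in> W \<delta>"
      with W_near[of \<delta>] elim have "y \<in> I \<inter> S" "y \<noteq> x" "dist y x < d"
        by (auto simp: dist_commute)
      with below \<open>y \<in> W \<delta>\<close> show "y \<in> {y \<in> I \<inter> W \<delta>. q y \<le> t}" by fastforce
    qed simp
    with W[of \<delta>] elim show ?case by simp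
  qed
  then show ?thesis by (simp add: tendsto_eventually)
qed

text \<open>Only the inequality \<open>\<ge>\<close> needs the hypothesis \<open>gaps\<close>; this is where monotonicity of the
  graph enters.\<close>
lemma Inf_density_levels_eq_Limsup:
  fixes q :: "real \<Rightarrow> real" and W :: "real \<Rightarrow> real set"
  assumes W: "\<And>\<delta>. 0 < \<delta> \<Longrightarrow> W \<delta> \<in> fmeasurable lebesgue \<and> measure lebesgue (W \<delta>) = \<delta>"
    and W_near: "\<And>\<delta>. W \<delta> \<subseteq> (S - {x}) \<inter> ball x \<delta>"
    and W_in: "\<forall>\<^sub>F \<delta> in at_right 0. W \<delta> \<subseteq> I"
    and gaps: "\<And>t s. t < s \<Longrightarrow> \<exists>\<^sub>F y in at x within (I \<inter> S). s < q y \<Longrightarrow>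
      \<exists>e>0. \<forall>d>0. \<exists>\<delta>\<in>{0<..<d}. \<exists>a. {a<..<a + e * \<delta>} \<subseteq> {y \<in> I \<inter> W \<delta>. t < q y}"
  shows "Inf (ereal ` {t. ((\<lambda>\<delta>. measure lebesgue {y \<in> I \<inter> W \<delta>. q y \<le> t} / \<delta>) \<longlongrightarrow> 1) (at_right 0)})
    = Limsup (at x within (I \<inter> S)) (\<lambda>y. ereal (q y))"
    (is "Inf (ereal ` ?T) = ?L")
proof (rule Inf_ereal_image_eqI)
  fix t assume "?L < ereal t"
  then have "\<forall>\<^sub>F y in at x within (I \<inter> S). q y < t" using Limsup_lessD by fastforce
  then show "t \<in> ?T" using density_tendsto_1_if_eventually_below[OF W W_near W_in] by simp
next
  fix t assume "t \<in> ?T"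
  show "?L \<le> ereal t"
  proof (rule ccontr)
    assume "\<not> ?L \<le> ereal t"
    then have "ereal t < ?L" by simp
    then obtain s' where "ereal t < s'" "s' < ?L" using dense by blast
    then obtain s where "s' = ereal s" by (cases s') simp_all
    with \<open>ereal t < s'\<close> \<open>s' < ?L\<close> have "t < s" "ereal s < ?L" by simp_all
    have "\<not> (\<forall>\<^sub>F y in at x within (I \<inter> S). q y \<le> s)"
    proof
      assume "\<forall>\<^sub>F y in at x within (I \<inter> S). q y \<le> s"
      then have "?L \<le> ereal s" by (intro Limsup_bounded) (auto elim: eventually_mono)
      with \<open>ereal s < ?L\<close> show False by simp
    qed
    then have "\<exists>\<^sub>F y in at x within (I \<inter> S). s < q y"
      unfolding not_eventually by (simp add: not_le)
    then obtain e where "e > 0"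
      and "\<forall>d>0. \<exists>\<delta>\<in>{0<..<d}. \<exists>a. {a<..<a + e * \<delta>} \<subseteq> {y \<in> I \<inter> W \<delta>. t < q y}"
      using gaps \<open>t < s\<close> by blast
    then have "\<forall>d>0. \<exists>\<delta>\<in>{0<..<d}. \<exists>a. {a<..<a + e * \<delta>} \<subseteq> W \<delta> - {y \<in> I \<inter> W \<delta>. q y \<le> t}"
      by (fastforce simp: subset_iff)
    then have "t \<notin> ?T"
      unfolding mem_Collect_eq
      by (intro density_not_tendsto_1_if_gaps[where B = "\<lambda>\<delta>. {y \<in> I \<inter> W \<delta>. q y \<le> t}" and e = e])
        (use W \<open>e > 0\<close> in auto)
    with \<open>t \<in> ?T\<close> show False by contradiction
  qed
qed

lemma approx_upper_right_eq_dini_upper_right: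
  fixes f :: "real \<Rightarrow> real"
  assumes I: "is_interval I" and cont: "continuous_on I f" and mon: "monotone_graph I f K"
    and "K \<ge> 1" "x \<in> I" "x1 \<in> I" "x < x1"
  shows "approx_upper_right f I x = dini_upper_right f I x"
  unfolding approx_upper_right_def dini_upper_right_def
proof (rule Inf_density_levels_eq_Limsup[where W = "\<lambda>\<delta>. {x<..<x + \<delta>}" and S = "{x<..}" and q = "diff_quot f x"])
  show "{x<..<x + \<delta>} \<in> fmeasurable lebesgue \<and> measure lebesgue {x<..<x + \<delta>} = \<delta>" if "0 < \<delta>" for \<delta>
    using that by simp
  show "{x<..<x + \<delta>} \<subseteq> ({x<..} - {x}) \<inter> ball x \<delta>" for \<delta>
    by (auto simp: dist_real_def)
  have "\<forall>\<^sub>F \<delta> in at_right 0. \<delta> < x1 - x"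
    using \<open>x < x1\<close> unfolding eventually_at_right_field by (intro exI[of _ "x1 - x"]) auto
  then show "\<forall>\<^sub>F \<delta> in at_right 0. {x<..<x + \<delta>} \<subseteq> I"
    by eventually_elim (use is_interval_atLeastAtMost_subset[OF I \<open>x \<in> I\<close> \<open>x1 \<in> I\<close>] in auto)
qed (fact monotone_graph_right_slope_intervals[OF I cont mon assms(4-7)])

lemma approx_upper_left_eq_dini_upper_left:
  fixes f :: "real \<Rightarrow> real"
  assumes I: "is_interval I" and cont: "continuous_on I f" and mon: "monotone_graph I f K"
    and "K \<ge> 1" "x \<in> I" "x0 \<in> I" "x0 < x"
  shows "approx_upper_left f I x = dini_upper_left f I x"
  unfolding approx_upper_left_def dini_upper_left_def
proof (rule Inf_density_levels_eq_Limsup[where W = "\<lambda>\<delta>. {x - \<delta><..<x}" and S = "{..<x}" and q = "diff_quot f x"])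
  show "{x - \<delta><..<x} \<in> fmeasurable lebesgue \<and> measure lebesgue {x - \<delta><..<x} = \<delta>" if "0 < \<delta>" for \<delta>
    using that by simp
  show "{x - \<delta><..<x} \<subseteq> ({..<x} - {x}) \<inter> ball x \<delta>" for \<delta>
    by (auto simp: dist_real_def)
  have "\<forall>\<^sub>F \<delta> in at_right 0. \<delta> < x - x0"
    using \<open>x0 < x\<close> unfolding eventually_at_right_field by (intro exI[of _ "x - x0"]) auto
  then show "\<forall>\<^sub>F \<delta> in at_right 0. {x - \<delta><..<x} \<subseteq> I"
    by eventually_elim (use is_interval_atLeastAtMost_subset[OF I \<open>x0 \<in> I\<close> \<open>x \<in> I\<close>] in auto)
qed (fact monotone_graph_left_slope_intervals[OF I cont mon assms(4-7)])

lemma uminus_image_eqI: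
  fixes A B :: "'a::group_add set"
  assumes "\<And>t. t \<in> A \<longleftrightarrow> - t \<in> B"
  shows "A = uminus ` B"
  by (rule set_eqI) (simp add: in_uminus_image_iff assms)

lemma Sup_ereal_uminus_image: "Sup (ereal ` uminus ` S) = - Inf (ereal ` S)"
proof -
  have "ereal ` uminus ` S = uminus ` ereal ` S" by (simp add: image_image)
  then show ?thesis by (simp add: ereal_Sup_uminus_image_eq)
qed

lemma approx_lower_right_eq_uminus:
  "approx_lower_right f I x = - approx_upper_right (\<lambda>v. - f v) I x"
proof -
  have "{t. ((\<lambda>\<delta>. measure lebesgue {y \<in> I \<inter> {x<..<x + \<delta>}. t \<le> diff_quot f x y} / \<delta>) \<longlongrightarrow> 1) (at_right 0)}
    = uminus ` {t. ((\<lambda>\<delta>. measure lebesgue {y \<in> I \<inter> {x<..<x + \<delta>}. diff_quot (\<lambda>v. - f v) x y \<le> t} / \<delta>)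
                   \<longlongrightarrow> 1) (at_right 0)}"
    by (rule uminus_image_eqI) (simp add: diff_quot_uminus)
  then show ?thesis
    unfolding approx_lower_right_def approx_upper_right_def by (simp only: Sup_ereal_uminus_image)
qed

lemma approx_lower_left_eq_uminus:
  "approx_lower_left f I x = - approx_upper_left (\<lambda>v. - f v) I x"
proof -
  have "{t. ((\<lambda>\<delta>. measure lebesgue {y \<in> I \<inter> {x - \<delta><..<x}. t \<le> diff_quot f x y} / \<delta>) \<longlongrightarrow> 1) (at_right 0)}
    = uminus ` {t. ((\<lambda>\<delta>. measure lebesgue {y \<in> I \<inter> {x - \<delta><..<x}. diff_quot (\<lambda>v. - f v) x y \<le> t} / \<delta>)
                   \<longlongrightarrow> 1) (at_right 0)}"
    by (rule uminus_image_eqI) (simp add: diff_quot_uminus)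
  then show ?thesis
    unfolding approx_lower_left_def approx_upper_left_def by (simp only: Sup_ereal_uminus_image)
qed

lemma dini_lower_right_eq_uminus:
  "dini_lower_right f I x = - dini_upper_right (\<lambda>v. - f v) I x"
  unfolding dini_lower_right_def dini_upper_right_def diff_quot_uminus
  using ereal_Limsup_uminus[of _ "\<lambda>y. ereal (diff_quot f x y)"] by simp

lemma dini_lower_left_eq_uminus:
  "dini_lower_left f I x = - dini_upper_left (\<lambda>v. - f v) I x"
  unfolding dini_lower_left_def dini_upper_left_def diff_quot_uminus
  using ereal_Limsup_uminus[of _ "\<lambda>y. ereal (diff_quot f x y)"] by simp

theorem proposition4p1:
  fixes I :: "real set" and f :: "real \<Rightarrow> real"
  assumes "is_interval I"
    and "\<exists>a\<in>I. \<exists>b\<in>I. a < b"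
    and "continuous_on I f"
    and "monotone_metric_space (graph_on I f) dist"
  shows "(\<forall>x\<in>I. (\<exists>y\<in>I. x < y) \<longrightarrow>
            approx_upper_right f I x = dini_upper_right f I x \<and>
            approx_lower_right f I x = dini_lower_right f I x) \<and>
         (\<forall>x\<in>I. (\<exists>y\<in>I. y < x) \<longrightarrow>
            approx_upper_left f I x = dini_upper_left f I x \<and>
            approx_lower_left f I x = dini_lower_left f I x)"
proof -
  obtain K where "K \<ge> 1" and mon: "monotone_graph I f K"
    using monotone_metric_space_graph_imp_monotone_graph[OF assms(1,3,4)] .
  have cont_neg: "continuous_on I (\<lambda>v. - f v)" using assms(3) by (rule continuous_on_minus)
  note mon_neg = monotone_graph_uminus[OF mon]
  show ?thesis
  proof (intro conjI ballI impI)
    fix x assume "x \<in> I" "\<exists>y\<in>I. x < y"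
    then obtain x1 where x1: "x1 \<in> I" "x < x1" by blast
    show "approx_upper_right f I x = dini_upper_right f I x"
      by (rule approx_upper_right_eq_dini_upper_right[OF assms(1,3) mon \<open>K \<ge> 1\<close> \<open>x \<in> I\<close> x1])
    show "approx_lower_right f I x = dini_lower_right f I x"
      unfolding approx_lower_right_eq_uminus dini_lower_right_eq_uminus
      by (simp add: approx_upper_right_eq_dini_upper_right[OF assms(1) cont_neg mon_neg \<open>K \<ge> 1\<close> \<open>x \<in> I\<close> x1])
  next
    fix x assume "x \<in> I" "\<exists>y\<in>I. y < x"
    then obtain x0 where x0: "x0 \<in> I" "x0 < x" by blast
    show "approx_upper_left f I x = dini_upper_left f I x"
      by (rule approx_upper_left_eq_dini_upper_left[OF assms(1,3) mon \<open>K \<ge> 1\<close> \<open>x \<in> I\<close> x0])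
    show "approx_lower_left f I x = dini_lower_left f I x"
      unfolding approx_lower_left_eq_uminus dini_lower_left_eq_uminus
      by (simp add: approx_upper_left_eq_dini_upper_left[OF assms(1) cont_neg mon_neg \<open>K \<ge> 1\<close> \<open>x \<in> I\<close> x0])
  qed
qed

end
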